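(* With $I_z$ as in the context, $I_z$ is stable under right multiplication by $\frac{1+v}{2}$, so it is a right $\mathcal O_L$-module via $\frac{1+\sqrt{-N}}{2}\mapsto$ right multiplication by $\frac{1+v}{2}$; and as a right $\mathcal O_L$-module, $I_z\cong J\oplus J$, where $J=a\mathbb Z+\frac{b-\sqrt{-N}}{2}\mathbb Z\subset\mathcal O_L$ (an ideal of $\mathcal O_L$ in the class determined by $Q$).
   Context: Let $D<-4$ be the discriminant of an imaginary quadratic field $K=\mathbb Q(\sqrt D)$ with $|D|$ prime. Let $N$ be a prime, split in the ring of integers of $K$, such that $-N$ is the discriminant of $L=\mathbb Q(\sqrt{-N})$ with ring of integers $\mathcal O_L$. Fix a prime ideal $\mathcal N$ of $\mathcal O_K$ of norm $N$, conjugate $\bar{\mathcal N}$; for a primitive integral ideal $\mathfrak a$ of $\mathcal O_K$ of norm prime to $N$, write $\mathfrak a\bar{\mathcal N}=a_1N\mathbb Z+\frac{-b_1+\sqrt D}{2}\mathbb Z$ with $a_1,b_1\in\mathbb Z$. Let $Q=[a,b,c]$ be a primitive positive definite form with $b^2-4ac=-N$. Let $B'=(D,-N)_{\mathbb Q}$ with basis $1,u,v,uv$, $u^2=D$, $v^2=-N$, $uv=-vu$. Define $I_z=\mathbb Zx_1+\mathbb Zx_2+\mathbb Zy_1+\mathbb Zy_2$ with $x_1=\frac{b_1-u}{2a_1N}\,av$, $x_2=\frac{b_1-u}{2a_1N}\cdot\frac{N+bv}{2}$, $y_1=\frac{b-v}{2}$, $y_2=-a$. *)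

theory Defs
  imports Main "HOL-Computational_Algebra.Computational_Algebra"
begin

definition fund_disc :: "int \<Rightarrow> bool" where
  "fund_disc d \<longleftrightarrow> (d mod 4 = 1 \<and> squarefree d) \<or>
     ((d mod 16 = 8 \<or> d mod 16 = 12) \<and> squarefree (d div 4))"

section \<open>The imaginary quadratic field K = Q(sqrt D), elements x + y sqrt D as pairs\<close>

type_synonym kelt = "rat \<times> rat"

definition kmul :: "int \<Rightarrow> kelt \<Rightarrow> kelt \<Rightarrow> kelt" where
  "kmul D p q = (fst p * fst q + of_int D * snd p * snd q, fst p * snd q + snd p * fst q)"

definition kadd :: "kelt \<Rightarrow> kelt \<Rightarrow> kelt" where
  "kadd p q = (fst p + fst q, snd p + snd q)"

definition kneg :: "kelt \<Rightarrow> kelt" where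
  "kneg p = (- fst p, - snd p)"

definition ksub :: "kelt \<Rightarrow> kelt \<Rightarrow> kelt" where
  "ksub p q = (fst p - fst q, snd p - snd q)"

text \<open>Ring of integers of K for a fundamental discriminant D: Z + Z (D + sqrt D)/2.\<close>
definition OK :: "int \<Rightarrow> kelt set" where
  "OK D = {(of_int m + of_int n * of_int D / 2, of_int n / 2) | m n :: int. True}"

definition zspan2 :: "kelt \<Rightarrow> kelt \<Rightarrow> kelt set" where
  "zspan2 p q = {(of_int m * fst p + of_int n * fst q, of_int m * snd p + of_int n * snd q)
                 | m n :: int. True}"

definition kis_ideal :: "int \<Rightarrow> kelt set \<Rightarrow> bool" where
  "kis_ideal D I \<longleftrightarrow> I \<subseteq> OK D \<and> (0, 0) \<in> I \<and>
     (\<forall>x\<in>I. \<forall>y\<in>I. kadd x y \<in> I) \<and> (\<forall>x\<in>I. kneg x \<in> I) \<and>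
     (\<forall>r\<in>OK D. \<forall>x\<in>I. kmul D r x \<in> I)"

definition kis_prime_ideal :: "int \<Rightarrow> kelt set \<Rightarrow> bool" where
  "kis_prime_ideal D P \<longleftrightarrow> kis_ideal D P \<and> P \<noteq> OK D \<and> P \<noteq> {(0,0)} \<and>
     (\<forall>x\<in>OK D. \<forall>y\<in>OK D. kmul D x y \<in> P \<longrightarrow> x \<in> P \<or> y \<in> P)"

text \<open>Absolute norm = index [O_K : I] (number of cosets).\<close>
definition kideal_norm :: "int \<Rightarrow> kelt set \<Rightarrow> nat" where
  "kideal_norm D I = card ((\<lambda>x. {y \<in> OK D. ksub x y \<in> I}) ` OK D)"

definition kprimitive_ideal :: "int \<Rightarrow> kelt set \<Rightarrow> bool" where
  "kprimitive_ideal D I \<longleftrightarrow>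
     \<not> (\<exists>n::int. n > 1 \<and> I \<subseteq> {(of_int n * fst z, of_int n * snd z) | z. z \<in> OK D})"

definition conj_set :: "kelt set \<Rightarrow> kelt set" where
  "conj_set I = (\<lambda>p. (fst p, - snd p)) ` I"

definition kideal_prod :: "int \<Rightarrow> kelt set \<Rightarrow> kelt set \<Rightarrow> kelt set" where
  "kideal_prod D A B = {((\<Sum>i<k. fst (kmul D (f i) (g i))), (\<Sum>i<k. snd (kmul D (f i) (g i))))
      | (k::nat) f g. \<forall>i<k. f i \<in> A \<and> g i \<in> B}"

definition splits_in :: "int \<Rightarrow> int \<Rightarrow> bool" where
  "splits_in D N \<longleftrightarrow> (\<exists>P. kis_prime_ideal D P \<and> int (kideal_norm D P) = N \<and> P \<noteq> conj_set P)"

type_synonym quat = "rat \<times> rat \<times> rat \<times> rat"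

text \<open>Coordinates (a0,a1,a2,a3) stand for a0 + a1 u + a2 v + a3 uv, with
  u^2 = alpha, v^2 = beta, uv = - vu.\<close>
definition qmul :: "rat \<Rightarrow> rat \<Rightarrow> quat \<Rightarrow> quat \<Rightarrow> quat" where
  "qmul al be x y = (case x of (a0,a1,a2,a3) \<Rightarrow> case y of (b0,b1,b2,b3) \<Rightarrow>
     (a0*b0 + al*a1*b1 + be*a2*b2 - al*be*a3*b3,
      a0*b1 + a1*b0 - be*a2*b3 + be*a3*b2,
      a0*b2 + a2*b0 + al*a1*b3 - al*a3*b1,
      a0*b3 + a3*b0 + a1*b2 - a2*b1))"

definition qadd :: "quat \<Rightarrow> quat \<Rightarrow> quat" where
  "qadd x y = (case x of (a0,a1,a2,a3) \<Rightarrow> case y of (b0,b1,b2,b3) \<Rightarrow>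
     (a0+b0, a1+b1, a2+b2, a3+b3))"

definition qsc :: "int \<Rightarrow> quat \<Rightarrow> quat" where
  "qsc m x = (case x of (a0,a1,a2,a3) \<Rightarrow>
     (of_int m * a0, of_int m * a1, of_int m * a2, of_int m * a3))"

definition qu :: quat where "qu = (0,1,0,0)"
definition qv :: quat where "qv = (0,0,1,0)"
definition qrat :: "rat \<Rightarrow> quat" where "qrat r = (r,0,0,0)"

definition Iz :: "int \<Rightarrow> int \<Rightarrow> int \<Rightarrow> int \<Rightarrow> int \<Rightarrow> int \<Rightarrow> quat set" where
  "Iz D N a b a1 b1 =
    (let mul = qmul (of_int D) (- of_int N);
         t = (of_int b1 / of_int (2*a1*N), - 1 / of_int (2*a1*N), 0, 0);
         x1 = mul t (0, 0, of_int a, 0);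
         x2 = mul t (of_int N / 2, 0, of_int b / 2, 0);
         y1 = (of_int b / 2, 0, - 1 / 2, 0);
         y2 = (- of_int a, 0, 0, 0)
     in {qadd (qadd (qsc m1 x1) (qsc m2 x2)) (qadd (qsc n1 y1) (qsc n2 y2)) | m1 m2 n1 n2. True})"

definition qomega :: quat where "qomega = (1/2, 0, 1/2, 0)"

section \<open>The field L = Q(sqrt(-N)): p + q sqrt(-N) as pairs\<close>

type_synonym lelt = "rat \<times> rat"

definition lmul :: "int \<Rightarrow> lelt \<Rightarrow> lelt \<Rightarrow> lelt" where
  "lmul N p q = (fst p * fst q - of_int N * snd p * snd q, fst p * snd q + snd p * fst q)"

definition ladd :: "lelt \<Rightarrow> lelt \<Rightarrow> lelt" where
  "ladd p q = (fst p + fst q, snd p + snd q)"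

text \<open>omega_L = (1 + sqrt(-N))/2, generating O_L = Z[omega_L] since -N = 1 mod 4.\<close>
definition lomega :: lelt where "lomega = (1/2, 1/2)"

definition Jideal :: "int \<Rightarrow> int \<Rightarrow> lelt set" where
  "Jideal a b = {(of_int m * of_int a + of_int n * of_int b / 2, - of_int n / 2) | m n :: int. True}"

end

theory Submission
  imports Defs
begin

(* Write t = (b1 - u)/(2 a1 N) and identify L = Q(sqrt(-N)) with Q(v) inside B'.
   Since v (b - v)/2 = (N + b v)/2, the generators of I_z give
       I_z = t v J  +  J      (J = a Z + (b - v)/2 Z),
   and B' = t v L (+) L is a direct sum of right L-modules as soon as t is invertible,
   i.e. a1 N <> 0.  The coordinate map  phi : t v l1 + l2 |-> (l1, l2)  is therefore an
   additive injection commuting with right multiplication by (1+v)/2 on one side and with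
   multiplication by omega_L = (1 + sqrt(-N))/2 on the other, and it maps I_z onto J x J.
   Stability of I_z under (1+v)/2 then follows by transporting the stability of J x J
   back along the injective map phi. *)

section \<open>Arithmetic in the imaginary quadratic field K\<close>

text \<open>The norm form of \<open>K\<close>; it is multiplicative and, for \<open>D < 0\<close>, anisotropic.
  Hence \<open>K\<close> has no zero divisors, which is all we need about its multiplication.\<close>

definition knorm :: "int \<Rightarrow> kelt \<Rightarrow> rat" where
  "knorm D p = fst p ^ 2 - of_int D * snd p ^ 2"

lemma knorm_kmul: "knorm D (kmul D x y) = knorm D x * knorm D y"
  by (simp add: knorm_def kmul_def power2_eq_square algebra_simps)

lemma knorm_eq_zero:
  assumes "D < 0" and "knorm D p = 0"
  shows "p = (0, 0)"
proof -
  obtain p1 p2 where p: "p = (p1, p2)" by (cases p)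
  have D': "(- of_int D :: rat) > 0" using assms(1) by simp
  have sum0: "p1 ^ 2 + (- of_int D) * p2 ^ 2 = 0" using assms(2) by (simp add: knorm_def p)
  have "(- of_int D) * p2 ^ 2 \<ge> 0" using D' by (intro mult_nonneg_nonneg) auto
  moreover have "p1 ^ 2 \<ge> 0" by simp
  ultimately have "p1 ^ 2 = 0" "(- of_int D) * p2 ^ 2 = 0" using sum0 by linarith+
  with D' show ?thesis by (simp add: p)
qed

lemma kmul_eq_zero:
  assumes "D < 0" and "kmul D x y = (0, 0)"
  shows "x = (0, 0) \<or> y = (0, 0)"
proof -
  have "knorm D (kmul D x y) = 0" using assms(2) by (simp add: knorm_def)
  then have "knorm D x * knorm D y = 0" by (simp only: knorm_kmul)
  then have "knorm D x = 0 \<or> knorm D y = 0" by simp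
  then show ?thesis using knorm_eq_zero[OF assms(1)] by blast
qed

lemma kideal_prod_mem:
  assumes "x \<in> A" and "y \<in> B"
  shows "kmul D x y \<in> kideal_prod D A B"
  unfolding kideal_prod_def mem_Collect_eq
  by (rule exI[of _ 1], rule exI[of _ "\<lambda>_. x"], rule exI[of _ "\<lambda>_. y"]) (simp add: assms)

lemma zspan2_zero_first:
  "z \<in> zspan2 (0, 0) w \<longleftrightarrow> (\<exists>n::int. z = (of_int n * fst w, of_int n * snd w))"
  by (auto simp: zspan2_def)

text \<open>No rank-one lattice \<open>Z w\<close> contains both a nonzero \<open>z\<close> and \<open>\<omega>\<^sub>K z\<close>, where
  \<open>\<omega>\<^sub>K = (D + \<surd>D)/2\<close>: otherwise \<open>\<omega>\<^sub>K\<close> would be rational.\<close>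

lemma line_not_omegaK_stable:
  assumes D: "D < 0" and z: "z \<noteq> (0, 0)"
    and z_line: "z = (of_int n1 * fst w, of_int n1 * snd w)"
    and wz_line: "kmul D (of_int D / 2, 1 / 2) z = (of_int n2 * fst w, of_int n2 * snd w)"
  shows False
proof -
  let ?c = "(of_int n1 * of_int D / 2 - of_int n2, of_int n1 / 2) :: kelt"
  have "kmul D ?c z = (of_int n1 * fst (kmul D (of_int D / 2, 1 / 2) z) - of_int n2 * fst z,
                       of_int n1 * snd (kmul D (of_int D / 2, 1 / 2) z) - of_int n2 * snd z)"
    by (simp add: kmul_def algebra_simps)
  also have "\<dots> = (0, 0)"
    unfolding wz_line by (simp add: z_line)
  finally have "kmul D ?c z = (0, 0)" .
  with kmul_eq_zero[OF D] z
  have "?c = (0, 0)" by blast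
  then have "n1 = 0" by simp
  with z z_line show False by simp
qed

lemma kideal_prod_not_line:
  assumes D: "D < 0" and A: "kis_ideal D A" "A \<noteq> {(0, 0)}"
    and y: "y \<in> B" "y \<noteq> (0, 0)"
  shows "kideal_prod D A B \<noteq> zspan2 (0, 0) w"
proof
  assume prod: "kideal_prod D A B = zspan2 (0, 0) w"
  obtain x where x: "x \<in> A" "x \<noteq> (0, 0)" using A unfolding kis_ideal_def by blast
  define \<omega> :: kelt where "\<omega> = (of_int D / 2, 1 / 2)"
  have "\<omega> \<in> OK D" unfolding OK_def \<omega>_def by (rule CollectI, rule exI[of _ 0], rule exI[of _ 1]) simp
  then have \<omega>x: "kmul D \<omega> x \<in> A" using A(1) x(1) unfolding kis_ideal_def by blast
  define z where "z = kmul D x y"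
  have z0: "z \<noteq> (0, 0)" using kmul_eq_zero[OF D] x y unfolding z_def by blast
  obtain n1 where n1: "z = (of_int n1 * fst w, of_int n1 * snd w)"
    using kideal_prod_mem[OF x(1) y(1), of D] prod by (auto simp: z_def zspan2_zero_first)
  have "kmul D (kmul D \<omega> x) y = kmul D \<omega> z"
    unfolding z_def kmul_def by (simp add: algebra_simps)
  then obtain n2 where n2: "kmul D \<omega> z = (of_int n2 * fst w, of_int n2 * snd w)"
    using kideal_prod_mem[OF \<omega>x y(1), of D] prod by (auto simp: zspan2_zero_first)
  show False using line_not_omegaK_stable[OF D z0 n1 n2[unfolded \<omega>_def]] .
qed

lemma conj_set_nonzero:
  assumes "kis_prime_ideal D P"
  obtains y where "y \<in> conj_set P" "y \<noteq> (0, 0)"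
proof -
  obtain p where "p \<in> P" "p \<noteq> (0, 0)"
    using assms unfolding kis_prime_ideal_def kis_ideal_def by blast
  moreover from \<open>p \<in> P\<close> have "(fst p, - snd p) \<in> conj_set P"
    unfolding conj_set_def by (rule imageI)
  ultimately show ?thesis using that[of "(fst p, - snd p)"] by (auto simp: prod_eq_iff)
qed

lemma first_basis_entry_nonzero:
  assumes "D < 0" and "kis_ideal D A" "A \<noteq> {(0, 0)}" and "kis_prime_ideal D P"
    and "kideal_prod D A (conj_set P) = zspan2 (of_int M, 0) w"
  shows "M \<noteq> 0"
proof
  assume "M = 0"
  obtain y where "y \<in> conj_set P" "y \<noteq> (0, 0)" using conj_set_nonzero[OF assms(4)] .
  then have "kideal_prod D A (conj_set P) \<noteq> zspan2 (0, 0) w"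
    by (rule kideal_prod_not_line[OF assms(1-3)])
  with assms(5) \<open>M = 0\<close> show False by simp
qed

section \<open>The ideal J of O_L\<close>

lemma prime_fund_disc_mod4:
  assumes "prime N" and "fund_disc (- N)"
  shows "(- N) mod 4 = 1"
proof -
  have "\<not> 4 dvd N"
  proof
    assume "4 dvd N"
    then have "even N" "N \<noteq> 2" using dvd_trans[of 2 4 N] by auto
    with prime_odd_int[OF assms(1)] prime_ge_2_int[OF assms(1)] show False by auto
  qed
  then have "\<not> ((- N) mod 16 = 8 \<or> (- N) mod 16 = 12)" by presburger
  then show ?thesis using assms(2) unfolding fund_disc_def by auto
qed

lemma disc_middle_coeff_odd:
  fixes N a b c :: int
  assumes "(- N) mod 4 = 1" and "b^2 - 4 * a * c = - N"
  shows "odd b"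
proof
  assume "even b"
  then obtain k where "b = 2 * k" by auto
  then have "b^2 - 4 * a * c = 4 * (k^2 - a * c)" by (simp add: power2_eq_square algebra_simps)
  with assms show False by presburger
qed

definition jelt :: "int \<Rightarrow> int \<Rightarrow> int \<Rightarrow> int \<Rightarrow> lelt" where
  "jelt a b m n = (of_int m * of_int a + of_int n * of_int b / 2, - of_int n / 2)"

lemma Jideal_eq: "Jideal a b = {jelt a b m n | m n. True}"
  by (simp add: Jideal_def jelt_def)

lemma jelt_times_omegaL:
  assumes "b = 2 * k + 1" and "b^2 - 4 * a * c = - N"
  shows "lmul N (jelt a b m n) lomega = jelt a b (m * (k + 1) + n * c) (- m * a - n * k)"
proof -
  have N: "(of_int N :: rat) = 4 * of_int a * of_int c - of_int b ^ 2"
    using arg_cong[OF assms(2), of "of_int :: int \<Rightarrow> rat"] by simp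
  show ?thesis
    by (simp add: jelt_def lmul_def lomega_def N assms(1) field_simps power2_eq_square)
qed

lemma Jideal_omegaL_stable:
  assumes "odd b" and "b^2 - 4 * a * c = - N" and "p \<in> Jideal a b"
  shows "lmul N p lomega \<in> Jideal a b"
proof -
  obtain k where k: "b = 2 * k + 1" using assms(1) by (rule oddE)
  obtain m n where "p = jelt a b m n" using assms(3) by (auto simp: Jideal_eq)
  then show ?thesis by (auto simp: Jideal_eq jelt_times_omegaL[OF k assms(2)])
qed

section \<open>The lattice I_z and its splitting\<close>

definition Iz_elem :: "int \<Rightarrow> int \<Rightarrow> int \<Rightarrow> int \<Rightarrow> int \<Rightarrow> int \<Rightarrow> int \<Rightarrow> int \<Rightarrow> int \<Rightarrow> quat" where
  "Iz_elem N a b a1 b1 m1 m2 n1 n2 =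
    (let s = of_int b1 / of_int (2 * a1 * N); r = - 1 / of_int (2 * a1 * N) in
     (of_int m2 * s * of_int N / 2 + of_int n1 * of_int b / 2 - of_int n2 * of_int a,
      of_int m2 * r * of_int N / 2,
      of_int m1 * s * of_int a + of_int m2 * s * of_int b / 2 - of_int n1 / 2,
      of_int m1 * r * of_int a + of_int m2 * r * of_int b / 2))"

lemma Iz_eq: "Iz D N a b a1 b1 = {Iz_elem N a b a1 b1 m1 m2 n1 n2 | m1 m2 n1 n2. True}"
  unfolding Iz_def Iz_elem_def Let_def
  by (simp add: qmul_def qadd_def qsc_def algebra_simps)

text \<open>Step (3): the coordinate map \<open>t v \<ell>\<^sub>1 + \<ell>\<^sub>2 \<mapsto> (\<ell>\<^sub>1, \<ell>\<^sub>2)\<close> of \<open>B' = t v L \<oplus> L\<close>,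
  written out in the basis \<open>1, u, v, uv\<close>.\<close>

definition split_coords :: "int \<Rightarrow> int \<Rightarrow> int \<Rightarrow> quat \<Rightarrow> lelt \<times> lelt" where
  "split_coords N a1 b1 x = (case x of (x0, x1, x2, x3) \<Rightarrow>
     ((- 2 * of_int a1 * of_int N * x3, 2 * of_int a1 * x1),
      (x0 + of_int b1 * x1, x2 + of_int b1 * x3)))"

lemma split_coords_qadd:
  "split_coords N a1 b1 (qadd x y) =
     (ladd (fst (split_coords N a1 b1 x)) (fst (split_coords N a1 b1 y)),
      ladd (snd (split_coords N a1 b1 x)) (snd (split_coords N a1 b1 y)))"
  by (cases x; cases y) (simp add: split_coords_def qadd_def ladd_def algebra_simps)

text \<open>Right multiplication by \<open>(1+v)/2\<close> becomes multiplication by \<open>\<omega>\<^sub>L\<close> in both coordinates.\<close>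

lemma split_coords_qomega:
  "split_coords N a1 b1 (qmul \<alpha> (- of_int N) x qomega) =
     (lmul N (fst (split_coords N a1 b1 x)) lomega, lmul N (snd (split_coords N a1 b1 x)) lomega)"
  by (cases x) (simp add: split_coords_def qmul_def qomega_def lmul_def lomega_def field_simps)

lemma split_coords_inj:
  assumes "a1 * N \<noteq> 0"
  shows "inj (split_coords N a1 b1)"
proof (rule injI)
  fix x y assume eq: "split_coords N a1 b1 x = split_coords N a1 b1 y"
  obtain x0 x1 x2 x3 y0 y1 y2 y3 where xy: "x = (x0, x1, x2, x3)" "y = (y0, y1, y2, y3)"
    by (cases x; cases y) auto
  have "of_int a1 \<noteq> (0::rat)" "of_int N \<noteq> (0::rat)" using assms by auto
  with eq have "x3 = y3" "x1 = y1" by (auto simp: split_coords_def xy)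
  with eq show "x = y" by (auto simp: split_coords_def xy)
qed

lemma split_coords_Iz_elem:
  assumes "a1 * N \<noteq> 0"
  shows "split_coords N a1 b1 (Iz_elem N a b a1 b1 m1 m2 n1 n2) = (jelt a b m1 m2, jelt a b (- n2) n1)"
  using assms by (simp add: split_coords_def Iz_elem_def jelt_def Let_def field_simps)

lemma split_coords_bij:
  assumes "a1 * N \<noteq> 0"
  shows "bij_betw (split_coords N a1 b1) (Iz D N a b a1 b1) (Jideal a b \<times> Jideal a b)"
proof (rule bij_betw_imageI)
  show "inj_on (split_coords N a1 b1) (Iz D N a b a1 b1)"
    using split_coords_inj[OF assms] by (rule inj_on_subset) simp
  show "split_coords N a1 b1 ` Iz D N a b a1 b1 = Jideal a b \<times> Jideal a b"
  proof (intro equalityI subsetI)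
    fix q assume "q \<in> split_coords N a1 b1 ` Iz D N a b a1 b1"
    then obtain m1 m2 n1 n2 where "q = split_coords N a1 b1 (Iz_elem N a b a1 b1 m1 m2 n1 n2)"
      by (auto simp: Iz_eq)
    then show "q \<in> Jideal a b \<times> Jideal a b"
      by (auto simp: split_coords_Iz_elem[OF assms] Jideal_eq)
  next
    fix q assume "q \<in> Jideal a b \<times> Jideal a b"
    then obtain m1 m2 m n where q: "q = (jelt a b m1 m2, jelt a b m n)" by (auto simp: Jideal_eq)
    have "Iz_elem N a b a1 b1 m1 m2 n (- m) \<in> Iz D N a b a1 b1" by (auto simp: Iz_eq)
    moreover have "q = split_coords N a1 b1 (Iz_elem N a b a1 b1 m1 m2 n (- m))"
      by (simp add: split_coords_Iz_elem[OF assms] q)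
    ultimately show "q \<in> split_coords N a1 b1 ` Iz D N a b a1 b1" by (rule rev_image_eqI)
  qed
qed

lemma stable_by_transport:
  assumes inj: "inj f" and img: "f ` S = S'"
    and intertwine: "\<And>x. f (T x) = T' (f x)" and stable: "\<And>y. y \<in> S' \<Longrightarrow> T' y \<in> S'"
    and x: "x \<in> S"
  shows "T x \<in> S"
proof -
  have "f (T x) \<in> f ` S" using img intertwine stable x by auto
  then obtain y where "y \<in> S" "f (T x) = f y" by auto
  with inj show "T x \<in> S" by (simp add: inj_eq)
qed

theorem mainTheorem15:
  fixes D N a b c a1 b1 :: int and A Nc :: "kelt set"
  assumes D_disc: "fund_disc D" and D_lt: "D < -4" and D_prime: "prime (- D)"
    and N_prime: "prime N" and N_split: "splits_in D N" and N_disc: "fund_disc (- N)"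
    and Nc_prime: "kis_prime_ideal D Nc" and Nc_norm: "int (kideal_norm D Nc) = N"
    and A_ideal: "kis_ideal D A" and A_nonzero: "A \<noteq> {(0, 0)}" and A_prim: "kprimitive_ideal D A"
    and A_coprime: "coprime (int (kideal_norm D A)) N"
    and A_basis: "kideal_prod D A (conj_set Nc) = zspan2 (of_int (a1 * N), 0) (- of_int b1 / 2, 1 / 2)"
    and Q_disc: "b^2 - 4 * a * c = - N" and Q_pos: "a > 0" and Q_prim: "gcd a (gcd b c) = 1"
  shows "(\<forall>x\<in>Iz D N a b a1 b1. qmul (of_int D) (- of_int N) x qomega \<in> Iz D N a b a1 b1)
       \<and> (\<exists>\<phi> :: quat \<Rightarrow> lelt \<times> lelt.
            bij_betw \<phi> (Iz D N a b a1 b1) (Jideal a b \<times> Jideal a b)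
          \<and> (\<forall>x\<in>Iz D N a b a1 b1. \<forall>y\<in>Iz D N a b a1 b1.
               \<phi> (qadd x y) = (ladd (fst (\<phi> x)) (fst (\<phi> y)), ladd (snd (\<phi> x)) (snd (\<phi> y))))
          \<and> (\<forall>x\<in>Iz D N a b a1 b1.
               \<phi> (qmul (of_int D) (- of_int N) x qomega)
                 = (lmul N (fst (\<phi> x)) lomega, lmul N (snd (\<phi> x)) lomega)))"
proof -
  let ?I = "Iz D N a b a1 b1" and ?J = "Jideal a b" and ?\<phi> = "split_coords N a1 b1"
  have a1N: "a1 * N \<noteq> 0"
    using first_basis_entry_nonzero[OF _ A_ideal A_nonzero Nc_prime A_basis] D_lt by simp
  have b_odd: "odd b"
    using disc_middle_coeff_odd[OF prime_fund_disc_mod4[OF N_prime N_disc] Q_disc] .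
  have bij: "bij_betw ?\<phi> ?I (?J \<times> ?J)" using split_coords_bij[OF a1N] .
  have stable: "\<forall>x\<in>?I. qmul (of_int D) (- of_int N) x qomega \<in> ?I"
  proof
    fix x assume x: "x \<in> ?I"
    have img: "?\<phi> ` ?I = ?J \<times> ?J" using bij by (simp add: bij_betw_def)
    show "qmul (of_int D) (- of_int N) x qomega \<in> ?I"
      by (rule stable_by_transport[where T = "\<lambda>x. qmul (of_int D) (- of_int N) x qomega"
            and T' = "\<lambda>pq. (lmul N (fst pq) lomega, lmul N (snd pq) lomega)",
            OF split_coords_inj[OF a1N] img split_coords_qomega _ x])
        (simp add: mem_Times_iff Jideal_omegaL_stable[OF b_odd Q_disc])
  qed
  have additive: "\<forall>x\<in>?I. \<forall>y\<in>?I.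
      ?\<phi> (qadd x y) = (ladd (fst (?\<phi> x)) (fst (?\<phi> y)), ladd (snd (?\<phi> x)) (snd (?\<phi> y)))"
    by (intro ballI) (rule split_coords_qadd)
  have omega_compat: "\<forall>x\<in>?I. ?\<phi> (qmul (of_int D) (- of_int N) x qomega)
      = (lmul N (fst (?\<phi> x)) lomega, lmul N (snd (?\<phi> x)) lomega)"
    by (intro ballI) (rule split_coords_qomega)
  show ?thesis using stable bij additive omega_compat by blast
qed

end
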